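(* Let $k\ge 2$ and let $\mathbf{A}$ be an algebra with a $0$-pointed or $1$-pointed $k$-cube term such that $\mathbf{A}^k$ is finitely generated. Then $d_{\mathbf{A}}(n)\in O(n^{k-1})$.
   Context: An algebra $\mathbf{A}$ has a $p$-pointed $k$-cube term if there is a term $F(x_1,\dots,x_m)$ in the language of $\mathbf{A}$ and a $k\times m$ matrix $M=[y_{i,j}]$ whose entries are variables and constant symbols (nullary operation symbols of the language), exactly $p$ distinct constant symbols occurring, such that every column of $M$ contains an entry different from the variable $x$ and the identities $F(y_{i,1},\dots,y_{i,m})\approx x$, $i=1,\dots,k$, hold in $\mathbf{A}$. $d_{\mathbf{A}}(n)$ is the least size of a generating set of $\mathbf{A}^n$. *)

theory Defs
  imports "HOL-Library.Extended_Nat" "HOL-Library.FuncSet"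
begin

datatype ('f, 'v) uterm = Var 'v | App 'f "('f, 'v) uterm list"

fun wf_term :: "('f \<Rightarrow> nat) \<Rightarrow> ('f, 'v) uterm \<Rightarrow> bool" where
  "wf_term ar (Var v) = True"
| "wf_term ar (App f ts) = (length ts = ar f \<and> (\<forall>t\<in>set ts. wf_term ar t))"

fun term_vars :: "('f, 'v) uterm \<Rightarrow> 'v set" where
  "term_vars (Var v) = {v}"
| "term_vars (App f ts) = (\<Union>t\<in>set ts. term_vars t)"

fun eval_term :: "('f \<Rightarrow> 'a list \<Rightarrow> 'a) \<Rightarrow> ('v \<Rightarrow> 'a) \<Rightarrow> ('f, 'v) uterm \<Rightarrow> 'a" where
  "eval_term I \<rho> (Var v) = \<rho> v"
| "eval_term I \<rho> (App f ts) = I f (map (eval_term I \<rho>) ts)"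

definition is_algebra :: "('f \<Rightarrow> nat) \<Rightarrow> 'a set \<Rightarrow> ('f \<Rightarrow> 'a list \<Rightarrow> 'a) \<Rightarrow> bool" where
  "is_algebra ar A I \<longleftrightarrow> A \<noteq> {} \<and>
     (\<forall>f xs. length xs = ar f \<and> set xs \<subseteq> A \<longrightarrow> I f xs \<in> A)"

definition power_carrier :: "'a set \<Rightarrow> nat \<Rightarrow> (nat \<Rightarrow> 'a) set" where
  "power_carrier A n = ({0..<n} \<rightarrow>\<^sub>E A)"

inductive_set power_Sg :: "('f \<Rightarrow> nat) \<Rightarrow> ('f \<Rightarrow> 'a list \<Rightarrow> 'a) \<Rightarrow> nat
    \<Rightarrow> (nat \<Rightarrow> 'a) set \<Rightarrow> (nat \<Rightarrow> 'a) set"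
  for ar I n G where
  gen: "g \<in> G \<Longrightarrow> g \<in> power_Sg ar I n G"
| op: "length xs = ar f \<Longrightarrow> (\<forall>x\<in>set xs. x \<in> power_Sg ar I n G) \<Longrightarrow>
       (\<lambda>i. if i < n then I f (map (\<lambda>x. x i) xs) else undefined) \<in> power_Sg ar I n G"

definition generates_power :: "('f \<Rightarrow> nat) \<Rightarrow> 'a set \<Rightarrow> ('f \<Rightarrow> 'a list \<Rightarrow> 'a) \<Rightarrow> nat
    \<Rightarrow> (nat \<Rightarrow> 'a) set \<Rightarrow> bool" where
  "generates_power ar A I n G \<longleftrightarrow>
     G \<subseteq> power_carrier A n \<and> power_Sg ar I n G = power_carrier A n"

text \<open>d_A(n): least size of a generating set of A^n (infinity if none is finite).\<close>
definition d_A :: "('f \<Rightarrow> nat) \<Rightarrow> 'a set \<Rightarrow> ('f \<Rightarrow> 'a list \<Rightarrow> 'a) \<Rightarrow> nat \<Rightarrow> enat" where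
  "d_A ar A I n = (INF G \<in> {G. finite G \<and> generates_power ar A I n G}. enat (card G))"

text \<open>A p-pointed k-cube term: term F in variables 0..<m (x_1..x_m), and a k x m matrix M
  whose entries are variables or constant symbols (nullary operation symbols); the variable x
  of the identities is Var 0 of the entry-variable type; exactly p distinct constant symbols
  occur; every column contains an entry different from x; and the identities
  F(M i 0, ..., M i (m-1)) = x hold in the algebra for all i < k.\<close>
definition is_entry :: "('f \<Rightarrow> nat) \<Rightarrow> ('f, nat) uterm \<Rightarrow> bool" where
  "is_entry ar e \<longleftrightarrow> (\<exists>v. e = Var v) \<or> (\<exists>c. ar c = 0 \<and> e = App c [])"

definition has_pointed_cube_term ::
    "('f \<Rightarrow> nat) \<Rightarrow> 'a set \<Rightarrow> ('f \<Rightarrow> 'a list \<Rightarrow> 'a) \<Rightarrow> nat \<Rightarrow> nat \<Rightarrow> bool" where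
  "has_pointed_cube_term ar A I p k \<longleftrightarrow>
    (\<exists>(F :: ('f, nat) uterm) m (M :: nat \<Rightarrow> nat \<Rightarrow> ('f, nat) uterm).
       wf_term ar F \<and> term_vars F \<subseteq> {0..<m} \<and>
       (\<forall>i<k. \<forall>j<m. is_entry ar (M i j)) \<and>
       card {c. \<exists>i<k. \<exists>j<m. M i j = App c []} = p \<and>
       (\<forall>j<m. \<exists>i<k. M i j \<noteq> Var 0) \<and>
       (\<forall>i<k. \<forall>\<rho>. (\<forall>v. \<rho> v \<in> A) \<longrightarrow>
          eval_term I (\<lambda>j. eval_term I \<rho> (M i j)) F = \<rho> 0))"

end

theory Submission
  imports Defs
begin

text \<open>Let \<open>e\<close> be the value of the constant of the cube term (any element if there is none).
  Every tuple of \<open>A\<^sup>n\<close> with at least \<open>k\<close> coordinates different from \<open>e\<close> is obtained by applying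
  the cube term to tuples with strictly fewer such coordinates: choose \<open>k\<close> of them, read
  coordinate \<open>l\<close> through row \<open>\<pi> l\<close> of the matrix (with \<open>\<pi>\<close> injective on the chosen ones), and
  note that each column has an entry \<open>\<noteq> x\<close>, which produces \<open>e\<close> at the corresponding chosen
  coordinate. Tuples with fewer than \<open>k\<close> coordinates \<open>\<noteq> e\<close> are images of \<open>A\<^sup>k\<close> under one of
  \<open>n ^ (k - 1)\<close> coordinate maps \<open>A\<^sup>k \<rightarrow> A\<^sup>n\<close>, so the images of a finite generating set of \<open>A\<^sup>k\<close>
  under these maps generate \<open>A\<^sup>n\<close>.\<close>

definition reindex :: "(nat \<Rightarrow> nat) \<Rightarrow> nat \<Rightarrow> (nat \<Rightarrow> 'a) \<Rightarrow> nat \<Rightarrow> 'a" where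
  "reindex \<tau> n x = (\<lambda>l. if l < n then x (\<tau> l) else undefined)"

definition eval_term_power :: "('f \<Rightarrow> 'a list \<Rightarrow> 'a) \<Rightarrow> nat \<Rightarrow> ('v \<Rightarrow> nat \<Rightarrow> 'a) \<Rightarrow> ('f, 'v) uterm
    \<Rightarrow> nat \<Rightarrow> 'a" where
  "eval_term_power I n b F = (\<lambda>l. if l < n then eval_term I (\<lambda>v. b v l) F else undefined)"

definition support :: "'a \<Rightarrow> nat \<Rightarrow> (nat \<Rightarrow> 'a) \<Rightarrow> nat set" where
  "support e n a = {l. l < n \<and> a l \<noteq> e}"

text \<open>Only the value of the constants matters: a \<open>0\<close>- or \<open>1\<close>-pointed cube term is one whose
  constant entries all denote a single element \<open>e\<close>.\<close>

definition cube_term_on ::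
    "('f \<Rightarrow> nat) \<Rightarrow> 'a set \<Rightarrow> ('f \<Rightarrow> 'a list \<Rightarrow> 'a) \<Rightarrow> 'a \<Rightarrow> nat \<Rightarrow> ('f, nat) uterm \<Rightarrow> nat
       \<Rightarrow> (nat \<Rightarrow> nat \<Rightarrow> ('f, nat) uterm) \<Rightarrow> bool" where
  "cube_term_on ar A I e k F m M \<longleftrightarrow>
     wf_term ar F \<and> term_vars F \<subseteq> {0..<m} \<and>
     (\<forall>i<k. \<forall>j<m. (\<exists>v. M i j = Var v) \<or> (\<exists>c. M i j = App c [] \<and> I c [] = e)) \<and>
     (\<forall>j<m. \<exists>i<k. M i j \<noteq> Var 0) \<and>
     (\<forall>i<k. \<forall>\<rho>. (\<forall>v. \<rho> v \<in> A) \<longrightarrow> eval_term I (\<lambda>j. eval_term I \<rho> (M i j)) F = \<rho> 0)"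

subsection \<open>Subuniverses of powers\<close>

lemma power_Sg_mono:
  assumes "G \<subseteq> H"
  shows "power_Sg ar I n G \<subseteq> power_Sg ar I n H"
proof
  fix x assume "x \<in> power_Sg ar I n G"
  then show "x \<in> power_Sg ar I n H"
    by induction (use assms in \<open>auto intro: power_Sg.intros\<close>)
qed

lemma power_Sg_subset_carrier:
  assumes alg: "is_algebra ar A I" and G: "G \<subseteq> power_carrier A n"
  shows "power_Sg ar I n G \<subseteq> power_carrier A n"
proof
  fix x assume "x \<in> power_Sg ar I n G"
  then show "x \<in> power_carrier A n"
  proof induction
    case (gen g)
    then show ?case using G by auto
  next
    case (op xs f)
    have "I f (map (\<lambda>x. x i) xs) \<in> A" if "i < n" for i
    proof -
      have "set (map (\<lambda>x. x i) xs) \<subseteq> A"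
        using op that unfolding power_carrier_def by (auto simp: PiE_def Pi_def)
      then show ?thesis using alg op(1) unfolding is_algebra_def by auto
    qed
    then show ?case unfolding power_carrier_def by (auto simp: PiE_def extensional_def)
  qed
qed

lemma power_Sg_reindex:
  assumes "\<forall>l<n. \<tau> l < k" and "x \<in> power_Sg ar I k G"
  shows "reindex \<tau> n x \<in> power_Sg ar I n (reindex \<tau> n ` G)"
  using assms(2)
proof induction
  case (gen g)
  then show ?case by (auto intro: power_Sg.gen)
next
  case (op xs f)
  have "(\<lambda>l. if l < n then I f (map (\<lambda>x. x l) (map (reindex \<tau> n) xs)) else undefined)
          \<in> power_Sg ar I n (reindex \<tau> n ` G)"
    by (rule power_Sg.op) (use op in auto)
  moreover have "(\<lambda>l. if l < n then I f (map (\<lambda>x. x l) (map (reindex \<tau> n) xs)) else undefined)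
      = reindex \<tau> n (\<lambda>i. if i < k then I f (map (\<lambda>x. x i) xs) else undefined)"
    using assms(1) by (auto simp: reindex_def fun_eq_iff o_def)
  ultimately show ?case by simp
qed

lemma power_Sg_eval_term:
  assumes "wf_term ar F"
    and "\<forall>v\<in>term_vars F. b v \<in> power_Sg ar I n G \<and> (\<forall>l\<ge>n. b v l = undefined)"
  shows "eval_term_power I n b F \<in> power_Sg ar I n G"
  using assms
proof (induction F)
  case (Var v)
  then have "eval_term_power I n b (Var v) = b v"
    by (auto simp: eval_term_power_def fun_eq_iff)
  then show ?case using Var by simp
next
  case (App f ts)
  have "(\<lambda>l. if l < n then I f (map (\<lambda>x. x l) (map (eval_term_power I n b) ts)) else undefined)
          \<in> power_Sg ar I n G"
    by (rule power_Sg.op) (use App in auto)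
  moreover have "(\<lambda>l. if l < n then I f (map (\<lambda>x. x l) (map (eval_term_power I n b) ts)) else undefined)
      = eval_term_power I n b (App f ts)"
    by (auto simp: eval_term_power_def fun_eq_iff o_def)
  ultimately show ?case by simp
qed

subsection \<open>Shrinking supports with the cube term\<close>

lemma eval_cube_entry:
  assumes "cube_term_on ar A I e k F m M" "i < k" "j < m"
  obtains v where "M i j = Var v" | "eval_term I \<rho> (M i j) = e"
proof -
  have "(\<exists>v. M i j = Var v) \<or> (\<exists>c. M i j = App c [] \<and> I c [] = e)"
    using assms unfolding cube_term_on_def by blast
  then show thesis
    using that by auto
qed

lemma cube_term_shrinks_support:
  assumes cube: "cube_term_on ar A I e k F m M" and k: "1 \<le> k" and e: "e \<in> A"
    and a: "a \<in> power_carrier A n" and large: "k \<le> card (support e n a)"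
  obtains b where "\<forall>j<m. b j \<in> power_carrier A n \<and> support e n (b j) \<subset> support e n a"
    and "eval_term_power I n b F = a"
proof -
  have fin_supp: "finite (support e n x)" for x
    unfolding support_def by simp
  obtain T where T: "T \<subseteq> support e n a" "card T = k"
    using obtain_subset_with_card_n[OF large] by blast
  then obtain h where h: "bij_betw h {0..<k} T"
    using ex_bij_betw_nat_finite[of T] fin_supp finite_subset by metis
  define \<pi> where "\<pi> l = (if l \<in> T then inv_into {0..<k} h l else 0)" for l
  have \<pi>_lt: "\<pi> l < k" for l
    using k inv_into_into[of l h "{0..<k}"] bij_betw_imp_surj_on[OF h] by (auto simp: \<pi>_def)
  have \<pi>_h: "\<pi> (h i) = i" if "i < k" for i
    using that h bij_betw_inv_into_left[OF h] by (auto simp: \<pi>_def bij_betw_def)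
  have aA: "a l \<in> A" if "l < n" for l
    using a that unfolding power_carrier_def by auto
  define \<rho> where "\<rho> l v = (if v = 0 then a l else e)" for l and v :: nat
  define b where "b j l = (if l < n then eval_term I (\<rho> l) (M (\<pi> l) j) else undefined)" for j l
  have b_in: "b j l \<in> A" if "j < m" "l < n" for j l
    using eval_cube_entry[OF cube \<pi>_lt[of l] that(1), where \<rho> = "\<rho> l"] that(2) aA e
    by cases (auto simp: b_def \<rho>_def)
  have b_e: "b j l = e" if "j < m" "l < n" "a l = e" for j l
    using eval_cube_entry[OF cube \<pi>_lt[of l] that(1), where \<rho> = "\<rho> l"] that
    by cases (auto simp: b_def \<rho>_def)
  have b_carrier: "b j \<in> power_carrier A n" if "j < m" for j
    using b_in[OF that] unfolding power_carrier_def by (auto simp: b_def)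
  have b_support: "support e n (b j) \<subset> support e n a" if j: "j < m" for j
  proof -
    have "support e n (b j) \<subseteq> support e n a"
      using b_e[OF j] by (auto simp: support_def)
    moreover obtain i where i: "i < k" "M i j \<noteq> Var 0"
      using cube j unfolding cube_term_on_def by blast
    have "h i \<in> support e n a"
      using T(1) bij_betw_apply[OF h] i(1) by auto
    moreover have "b j (h i) = e"
      using eval_cube_entry[OF cube i(1) j, where \<rho> = "\<rho> (h i)"] i \<open>h i \<in> support e n a\<close>
      by cases (auto simp: b_def \<rho>_def \<pi>_h support_def)
    then have "h i \<notin> support e n (b j)"
      by (simp add: support_def)
    ultimately show ?thesis by blast
  qed
  have "eval_term_power I n b F = a"
  proof
    fix l
    show "eval_term_power I n b F l = a l"
    proof (cases "l < n")
      case True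
      have "\<forall>v. \<rho> l v \<in> A"
        using aA[OF True] e by (simp add: \<rho>_def)
      then have "eval_term I (\<lambda>j. eval_term I (\<rho> l) (M (\<pi> l) j)) F = a l"
        using cube \<pi>_lt unfolding cube_term_on_def by (auto simp: \<rho>_def)
      then show ?thesis
        using True by (simp add: eval_term_power_def b_def)
    next
      case False
      then show ?thesis
        using a unfolding power_carrier_def by (auto simp: eval_term_power_def)
    qed
  qed
  then show ?thesis
    using that b_carrier b_support by blast
qed

lemma power_Sg_eq_carrier_if_small_supports:
  assumes alg: "is_algebra ar A I" and cube: "cube_term_on ar A I e k F m M"
    and k: "1 \<le> k" and e: "e \<in> A" and H: "H \<subseteq> power_carrier A n"
    and small: "\<And>a. a \<in> power_carrier A n \<Longrightarrow> card (support e n a) < k \<Longrightarrow> a \<in> power_Sg ar I n H"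
  shows "power_Sg ar I n H = power_carrier A n"
proof
  show "power_Sg ar I n H \<subseteq> power_carrier A n"
    using power_Sg_subset_carrier[OF alg H] .
  have "a \<in> power_Sg ar I n H" if "a \<in> power_carrier A n" for a
    using that
  proof (induction "card (support e n a)" arbitrary: a rule: less_induct)
    case less
    show ?case
    proof (cases "card (support e n a) < k")
      case True
      then show ?thesis using small less.prems by blast
    next
      case False
      then have "k \<le> card (support e n a)"
        by simp
      then obtain b where b: "\<forall>j<m. b j \<in> power_carrier A n \<and> support e n (b j) \<subset> support e n a"
        and a: "eval_term_power I n b F = a"
        by (rule cube_term_shrinks_support[OF cube k e less.prems])
      have "b j \<in> power_Sg ar I n H \<and> (\<forall>l\<ge>n. b j l = undefined)" if "j \<in> term_vars F" for j
      proof -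
        have j: "j < m" using that cube unfolding cube_term_on_def by auto
        have "card (support e n (b j)) < card (support e n a)"
          using b j by (intro psubset_card_mono) (auto simp: support_def)
        moreover have "b j \<in> power_carrier A n"
          using b j by blast
        ultimately show ?thesis
          using less.hyps[of "b j"] PiE_arb[of "b j" "{0..<n}" "\<lambda>_. A"]
          unfolding power_carrier_def by simp
      qed
      moreover have "wf_term ar F"
        using cube unfolding cube_term_on_def by blast
      ultimately show ?thesis
        using power_Sg_eval_term[of ar F b I n H] a by blast
    qed
  qed
  then show "power_carrier A n \<subseteq> power_Sg ar I n H" by blast
qed

subsection \<open>Tuples with small support\<close>

text \<open>Coordinate \<open>k - 1\<close> of \<open>A\<^sup>k\<close> is reserved for \<open>e\<close>; the others are spread over the
  coordinates \<open>\<sigma> 0, \<dots>, \<sigma> (k - 2)\<close> of \<open>A\<^sup>n\<close>.\<close>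

definition spread_index :: "nat \<Rightarrow> (nat \<Rightarrow> nat) \<Rightarrow> nat \<Rightarrow> nat" where
  "spread_index k \<sigma> l = (if \<exists>i<k - 1. \<sigma> i = l then LEAST i. i < k - 1 \<and> \<sigma> i = l else k - 1)"

definition spread_generators :: "nat \<Rightarrow> nat \<Rightarrow> (nat \<Rightarrow> 'a) set \<Rightarrow> (nat \<Rightarrow> 'a) set" where
  "spread_generators k n G = (\<Union>\<sigma>\<in>{0..<k - 1} \<rightarrow>\<^sub>E {0..<n}. reindex (spread_index k \<sigma>) n ` G)"

lemma spread_index_hit:
  assumes "\<exists>i<k - 1. \<sigma> i = l"
  shows "spread_index k \<sigma> l < k - 1 \<and> \<sigma> (spread_index k \<sigma> l) = l"
  using LeastI_ex[OF assms] assms by (simp add: spread_index_def)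

lemma spread_index_lt:
  assumes "1 \<le> k"
  shows "spread_index k \<sigma> l < k"
  using spread_index_hit[of k \<sigma> l] assms by (cases "\<exists>i<k - 1. \<sigma> i = l") (auto simp: spread_index_def)

lemma finite_card_spread_generators:
  assumes "finite G"
  shows "finite (spread_generators k n G) \<and> card (spread_generators k n G) \<le> card G * n ^ (k - 1)"
proof -
  have fin: "finite ({0..<k - 1} \<rightarrow>\<^sub>E {0..<n})"
    by (rule finite_PiE) auto
  have "card (spread_generators k n G)
      \<le> (\<Sum>\<sigma>\<in>{0..<k - 1} \<rightarrow>\<^sub>E {0..<n}. card (reindex (spread_index k \<sigma>) n ` G))"
    unfolding spread_generators_def by (rule card_UN_le[OF fin])
  also have "\<dots> \<le> (\<Sum>\<sigma>\<in>{0..<k - 1} \<rightarrow>\<^sub>E {0..<n}. card G)"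
    by (intro sum_mono card_image_le[OF assms])
  also have "\<dots> = card G * n ^ (k - 1)"
    by (simp add: card_PiE)
  finally show ?thesis
    using fin assms by (auto simp: spread_generators_def)
qed

lemma spread_generators_subset_carrier:
  assumes "1 \<le> k" and "G \<subseteq> power_carrier A k"
  shows "spread_generators k n G \<subseteq> power_carrier A n"
proof
  fix x assume "x \<in> spread_generators k n G"
  then obtain \<sigma> g where g: "g \<in> G" and x: "x = reindex (spread_index k \<sigma>) n g"
    unfolding spread_generators_def by blast
  have "g \<in> {0..<k} \<rightarrow>\<^sub>E A"
    using g assms(2) unfolding power_carrier_def by blast
  then have "g (spread_index k \<sigma> l) \<in> A" for l
    using PiE_mem spread_index_lt[OF assms(1)] by fastforce
  then show "x \<in> power_carrier A n"
    unfolding x reindex_def power_carrier_def by auto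
qed

lemma exists_PiE_covering:
  fixes n :: nat
  assumes "S \<subseteq> {0..<n}" and "card S \<le> r" and "0 < n"
  obtains \<sigma> where "\<sigma> \<in> {0..<r} \<rightarrow>\<^sub>E {0..<n}" and "S \<subseteq> \<sigma> ` {0..<r}"
proof -
  have "finite S"
    by (rule finite_subset[OF assms(1)]) simp
  then obtain h where h: "bij_betw h {0..<card S} S"
    using ex_bij_betw_nat_finite by blast
  define \<sigma> where "\<sigma> i = (if i < card S then h i else if i < r then 0 else undefined)" for i
  have "h i < n" if "i < card S" for i
    using bij_betw_apply[OF h, of i] that assms(1) by auto
  then have "\<sigma> \<in> {0..<r} \<rightarrow>\<^sub>E {0..<n}"
    using assms(2,3) by (auto simp: \<sigma>_def)
  moreover have "S \<subseteq> \<sigma> ` {0..<r}"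
  proof
    fix l assume "l \<in> S"
    then obtain i where "i < card S" "h i = l"
      using bij_betw_imp_surj_on[OF h] by force
    then show "l \<in> \<sigma> ` {0..<r}"
      using assms(2) by (auto simp: \<sigma>_def intro!: image_eqI[of _ _ i])
  qed
  ultimately show thesis
    using that by blast
qed

lemma small_support_in_power_Sg_spread_generators:
  assumes k: "1 \<le> k" and e: "e \<in> A" and n: "0 < n"
    and G: "power_Sg ar I k G = power_carrier A k"
    and a: "a \<in> power_carrier A n" and small: "card (support e n a) < k"
  shows "a \<in> power_Sg ar I n (spread_generators k n G)"
proof -
  have "support e n a \<subseteq> {0..<n}" and "card (support e n a) \<le> k - 1"
    using small by (auto simp: support_def)
  then obtain \<sigma> where \<sigma>: "\<sigma> \<in> {0..<k - 1} \<rightarrow>\<^sub>E {0..<n}"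
    and cover: "support e n a \<subseteq> \<sigma> ` {0..<k - 1}"
    using exists_PiE_covering n by metis
  define g where "g i = (if i < k - 1 then a (\<sigma> i) else if i = k - 1 then e else undefined)" for i
  have "g i \<in> A" if "i < k" for i
  proof (cases "i < k - 1")
    case True
    then show ?thesis
      using PiE_mem[OF a[unfolded power_carrier_def]] PiE_mem[OF \<sigma>] by (simp add: g_def)
  next
    case False
    then have "i = k - 1"
      using that by linarith
    then show ?thesis
      using e by (simp add: g_def)
  qed
  moreover have "g \<in> extensional {0..<k}"
    using k by (auto simp: g_def extensional_def)
  ultimately have "g \<in> power_carrier A k"
    unfolding power_carrier_def by (simp add: PiE_iff)
  then have "reindex (spread_index k \<sigma>) n g \<in> power_Sg ar I n (reindex (spread_index k \<sigma>) n ` G)"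
    using power_Sg_reindex spread_index_lt[OF k] G by blast
  also have "\<dots> \<subseteq> power_Sg ar I n (spread_generators k n G)"
    using \<sigma> by (auto simp: spread_generators_def intro!: power_Sg_mono)
  also have "reindex (spread_index k \<sigma>) n g = a"
  proof
    fix l
    consider "l \<ge> n" | "l < n" "\<exists>i<k - 1. \<sigma> i = l" | "l < n" "\<forall>i<k - 1. \<sigma> i \<noteq> l"
      by force
    then show "reindex (spread_index k \<sigma>) n g l = a l"
    proof cases
      case 1
      then have "a l = undefined"
        using PiE_arb[OF a[unfolded power_carrier_def]] by simp
      then show ?thesis
        using 1 by (simp add: reindex_def)
    next
      case 2
      then show ?thesis
        using spread_index_hit[of k \<sigma> l] by (simp add: reindex_def g_def)
    next
      case 3
      then have "l \<notin> support e n a"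
        using cover by force
      moreover have "spread_index k \<sigma> l = k - 1"
        using 3 by (auto simp: spread_index_def)
      ultimately show ?thesis
        using 3 by (simp add: support_def reindex_def g_def)
    qed
  qed
  finally show ?thesis .
qed

lemma generates_power_spread_generators:
  assumes alg: "is_algebra ar A I" and cube: "cube_term_on ar A I e k F m M"
    and k: "1 \<le> k" and e: "e \<in> A" and n: "0 < n" and G: "generates_power ar A I k G"
  shows "generates_power ar A I n (spread_generators k n G)"
proof -
  have sub: "spread_generators k n G \<subseteq> power_carrier A n"
    using spread_generators_subset_carrier[OF k] G unfolding generates_power_def by blast
  have "power_Sg ar I n (spread_generators k n G) = power_carrier A n"
    using power_Sg_eq_carrier_if_small_supports[OF alg cube k e sub]
      small_support_in_power_Sg_spread_generators[OF k e n] G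
    unfolding generates_power_def by blast
  with sub show ?thesis
    unfolding generates_power_def by blast
qed

subsection \<open>The growth bound\<close>

lemma d_A_le_card:
  assumes "finite G" and "generates_power ar A I n G"
  shows "d_A ar A I n \<le> enat (card G)"
  unfolding d_A_def using assms by (intro INF_lower) auto

lemma cube_term_on_if_pointed:
  assumes alg: "is_algebra ar A I" and p: "p \<le> 1" and cube: "has_pointed_cube_term ar A I p k"
  obtains e F m M where "e \<in> A" and "cube_term_on ar A I e k F m M"
proof -
  obtain F m M where F: "wf_term ar F" "term_vars F \<subseteq> {0..<m::nat}"
    and entries: "\<forall>i<k. \<forall>j<m. is_entry ar (M i j)"
    and card_consts: "card {c. \<exists>i<k. \<exists>j<m. M i j = App c []} = p"
    and columns: "\<forall>j<m. \<exists>i<k. M i j \<noteq> Var (0::nat)"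
    and identities: "\<forall>i<k. \<forall>\<rho>. (\<forall>v. \<rho> v \<in> A) \<longrightarrow> eval_term I (\<lambda>j. eval_term I \<rho> (M i j)) F = \<rho> 0"
    using cube unfolding has_pointed_cube_term_def by blast
  define C where "C = {c. \<exists>i<k. \<exists>j<m. M i j = App c []}"
  have "C \<subseteq> (\<lambda>(i, j). case M i j of App c _ \<Rightarrow> c) ` ({0..<k} \<times> {0..<m})"
    unfolding C_def by force
  then have "finite C"
    by (rule finite_subset) simp
  obtain e where e: "e \<in> A" and e_const: "\<forall>c\<in>C. I c [] = e"
  proof (cases "p = 0")
    case True
    then have "C = {}"
      using card_consts \<open>finite C\<close> by (simp add: C_def)
    moreover obtain e where "e \<in> A"
      using alg unfolding is_algebra_def by blast
    ultimately show thesis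
      using that by blast
  next
    case False
    then have "card C = 1"
      using card_consts p by (simp add: C_def)
    then obtain c where c: "C = {c}"
      by (rule card_1_singletonE)
    then obtain i j where "i < k" "j < m" "M i j = App c []"
      unfolding C_def by blast
    then have "ar c = 0"
      using entries unfolding is_entry_def by fastforce
    then have "I c [] \<in> A"
      using alg unfolding is_algebra_def by simp
    then show thesis
      using that c by blast
  qed
  have "\<forall>i<k. \<forall>j<m. (\<exists>v. M i j = Var v) \<or> (\<exists>c. M i j = App c [] \<and> I c [] = e)"
    using entries e_const unfolding is_entry_def C_def by blast
  then have "cube_term_on ar A I e k F m M"
    using F columns identities unfolding cube_term_on_def by blast
  then show thesis
    using that e by blast
qed

theorem corollary5p6:
  fixes ar :: "'f \<Rightarrow> nat" and A :: "'a set" and I :: "'f \<Rightarrow> 'a list \<Rightarrow> 'a" and k p :: nat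
  assumes "k \<ge> 2"
    and "is_algebra ar A I"
    and "p \<le> 1"
    and "has_pointed_cube_term ar A I p k"
    and "\<exists>G. finite G \<and> generates_power ar A I k G"
  shows "\<exists>C::nat. \<forall>\<^sub>F n in sequentially. d_A ar A I n \<le> enat (C * n ^ (k - 1))"
proof -
  obtain e F m M where e: "e \<in> A" and cube: "cube_term_on ar A I e k F m M"
    using cube_term_on_if_pointed[OF assms(2-4)] .
  obtain G where G: "finite G" "generates_power ar A I k G"
    using assms(5) by blast
  have "d_A ar A I n \<le> enat (card G * n ^ (k - 1))" if "n \<ge> 1" for n
  proof -
    have "generates_power ar A I n (spread_generators k n G)"
      using generates_power_spread_generators[OF assms(2) cube _ e _ G(2)] assms(1) that by simp
    then have "d_A ar A I n \<le> enat (card (spread_generators k n G))"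
      using d_A_le_card finite_card_spread_generators[OF G(1)] by blast
    also have "\<dots> \<le> enat (card G * n ^ (k - 1))"
      using finite_card_spread_generators[OF G(1)] by simp
    finally show ?thesis .
  qed
  then show ?thesis
    unfolding eventually_sequentially by blast
qed

end
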